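(* Let $V$ be a finite set of truth values and $\models_{\mathcal{D}_p,\mathcal{D}_c}$ a mixed consequence truth-relation on $V$, with a constant expressive semantics. Then it admits a G-conditional, and for every classical connective $C$ it admits a regular connective sharing a regularity rule with $C$.
   Context: $V$ contains distinct $1,0$; sets of designated values $\mathcal{D}$ satisfy $1\in\mathcal{D}$, $0\notin\mathcal{D}$; $\gamma\models_{\mathcal{D}_p,\mathcal{D}_c}\delta$ iff ($\gamma\subseteq\mathcal{D}_p\Rightarrow\delta\cap\mathcal{D}_c\neq\emptyset$). Semantics: valuations mapping atoms to $V$, each connective interpreted by a fixed truth function, extended compositionally, every assignment to finitely many distinct atoms realized; constant expressive: every value is the constant value of some formula. $\Gamma\vdash\Delta$ iff $v(\Gamma)\models v(\Delta)$ for all $v$; $\Gamma,A=\Gamma\cup\{A\}$. An $n$-ary connective $C$ is regular with rule $(\mathcal{B}^p,\mathcal{B}^c)$ ($\mathcal{B}^p,\mathcal{B}^c\subseteq\mathcal{P}(\{1..n\})^2$) if for all $\Gamma,\Delta,F_1..F_n$: $\Gamma,C(\vec F)\vdash\Delta$ iff for all $(B_p,B_c)\in\mathcal{B}^p$, $\Gamma\cup\{F_i:i\in B_p\}\vdash\{F_i:i\in B_c\}\cup\Delta$; $\Gamma\vdash C(\vec F),\Delta$ iff the same for all $(B_p,B_c)\in\mathcal{B}^c$. A classical connective is a truth function $\{0,1\}^n\to\{0,1\}$, regular in classical logic ($V=\{0,1\}$, relation $\models_{\{1\},\{1\}}$); two connectives share a regularity rule if some $(\mathcal{B}^p,\mathcal{B}^c)$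 is satisfied by both in their respective logics. "Admits" a connective: some truth function on $V$ interprets a connective with the property. A G-conditional satisfies $\Gamma\vdash A\to B,\Delta$ iff $\Gamma,A\vdash B,\Delta$, and $\Gamma,A\to B\vdash\Delta$ iff ($\Gamma\vdash A,\Delta$ and $\Gamma,B\vdash\Delta$). *)

theory Defs
  imports Main
begin

datatype 'c fm = Atom nat | Op 'c "'c fm list"

fun wf :: "('c \<Rightarrow> nat) \<Rightarrow> 'c fm \<Rightarrow> bool" where
  "wf ar (Atom p) = True"
| "wf ar (Op c Fs) = (length Fs = ar c \<and> list_all (wf ar) Fs)"

fun eval :: "('c \<Rightarrow> 'v list \<Rightarrow> 'v) \<Rightarrow> (nat \<Rightarrow> 'v) \<Rightarrow> 'c fm \<Rightarrow> 'v" where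
  "eval I v (Atom p) = v p"
| "eval I v (Op c Fs) = I c (map (eval I v) Fs)"

definition realizes_finite :: "(nat \<Rightarrow> 'v) set \<Rightarrow> bool" where
  "realizes_finite Vals \<longleftrightarrow>
     (\<forall>S g. finite S \<longrightarrow> (\<exists>v\<in>Vals. \<forall>p\<in>S. v p = g p))"

definition mixed_models :: "'v set \<Rightarrow> 'v set \<Rightarrow> 'v set \<Rightarrow> 'v set \<Rightarrow> bool" where
  "mixed_models Dp Dc \<gamma> \<delta> \<longleftrightarrow> (\<gamma> \<subseteq> Dp \<longrightarrow> \<delta> \<inter> Dc \<noteq> {})"

definition conseq ::
  "'v set \<Rightarrow> 'v set \<Rightarrow> ('c \<Rightarrow> 'v list \<Rightarrow> 'v) \<Rightarrow> (nat \<Rightarrow> 'v) set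
   \<Rightarrow> 'c fm set \<Rightarrow> 'c fm set \<Rightarrow> bool" where
  "conseq Dp Dc I Vals \<Gamma> \<Delta> \<longleftrightarrow>
     (\<forall>v\<in>Vals. mixed_models Dp Dc (eval I v ` \<Gamma>) (eval I v ` \<Delta>))"

definition constant_expressive ::
  "('c \<Rightarrow> nat) \<Rightarrow> ('c \<Rightarrow> 'v list \<Rightarrow> 'v) \<Rightarrow> (nat \<Rightarrow> 'v) set \<Rightarrow> bool" where
  "constant_expressive ar I Vals \<longleftrightarrow>
     (\<forall>x. \<exists>A. wf ar A \<and> (\<forall>v\<in>Vals. eval I v A = x))"

text \<open>Extension of a language by one new connective (named None) of arity n with truth function f.\<close>
definition ext_ar :: "('c \<Rightarrow> nat) \<Rightarrow> nat \<Rightarrow> 'c option \<Rightarrow> nat" where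
  "ext_ar ar n = case_option n ar"

definition ext_I ::
  "('c \<Rightarrow> 'v list \<Rightarrow> 'v) \<Rightarrow> ('v list \<Rightarrow> 'v) \<Rightarrow> 'c option \<Rightarrow> 'v list \<Rightarrow> 'v" where
  "ext_I I f = case_option f I"

definition G_conditional ::
  "'v set \<Rightarrow> 'v set \<Rightarrow> ('c \<Rightarrow> nat) \<Rightarrow> ('c \<Rightarrow> 'v list \<Rightarrow> 'v) \<Rightarrow> (nat \<Rightarrow> 'v) set \<Rightarrow> 'c \<Rightarrow> bool" where
  "G_conditional Dp Dc ar I Vals c \<longleftrightarrow> ar c = 2 \<and>
     (\<forall>\<Gamma> \<Delta> A B. (\<forall>F\<in>\<Gamma>. wf ar F) \<longrightarrow> (\<forall>F\<in>\<Delta>. wf ar F) \<longrightarrow> wf ar A \<longrightarrow> wf ar B \<longrightarrow>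
        (conseq Dp Dc I Vals \<Gamma> (insert (Op c [A, B]) \<Delta>)
           \<longleftrightarrow> conseq Dp Dc I Vals (insert A \<Gamma>) (insert B \<Delta>)) \<and>
        (conseq Dp Dc I Vals (insert (Op c [A, B]) \<Gamma>) \<Delta>
           \<longleftrightarrow> conseq Dp Dc I Vals \<Gamma> (insert A \<Delta>) \<and> conseq Dp Dc I Vals (insert B \<Gamma>) \<Delta>))"

text \<open>Regularity of an n-ary connective c with rule (Bp, Bc); argument positions are
  indexed 0..n-1 (the paper uses 1..n).\<close>
definition regular_with ::
  "'v set \<Rightarrow> 'v set \<Rightarrow> ('c \<Rightarrow> nat) \<Rightarrow> ('c \<Rightarrow> 'v list \<Rightarrow> 'v) \<Rightarrow> (nat \<Rightarrow> 'v) set \<Rightarrow> 'c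
   \<Rightarrow> (nat set \<times> nat set) set \<Rightarrow> (nat set \<times> nat set) set \<Rightarrow> bool" where
  "regular_with Dp Dc ar I Vals c Bp Bc \<longleftrightarrow>
     (\<forall>B\<in>Bp \<union> Bc. fst B \<subseteq> {..<ar c} \<and> snd B \<subseteq> {..<ar c}) \<and>
     (\<forall>\<Gamma> \<Delta> Fs. (\<forall>F\<in>\<Gamma>. wf ar F) \<longrightarrow> (\<forall>F\<in>\<Delta>. wf ar F) \<longrightarrow>
        length Fs = ar c \<longrightarrow> list_all (wf ar) Fs \<longrightarrow>
        (conseq Dp Dc I Vals (insert (Op c Fs) \<Gamma>) \<Delta> \<longleftrightarrow>
           (\<forall>(P, C)\<in>Bp. conseq Dp Dc I Vals (\<Gamma> \<union> {Fs ! i | i. i \<in> P})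
                                             ({Fs ! i | i. i \<in> C} \<union> \<Delta>))) \<and>
        (conseq Dp Dc I Vals \<Gamma> (insert (Op c Fs) \<Delta>) \<longleftrightarrow>
           (\<forall>(P, C)\<in>Bc. conseq Dp Dc I Vals (\<Gamma> \<union> {Fs ! i | i. i \<in> P})
                                             ({Fs ! i | i. i \<in> C} \<union> \<Delta>))))"

text \<open>Classical logic for a single n-ary classical connective g: values bool,
  1 = True, 0 = False, D_p = D_c = {True}, all valuations; the language has the one
  connective (named ()) of arity n interpreted by g.\<close>
definition classical_regular_with ::
  "nat \<Rightarrow> (bool list \<Rightarrow> bool) \<Rightarrow> (nat set \<times> nat set) set \<Rightarrow> (nat set \<times> nat set) set \<Rightarrow> bool" where
  "classical_regular_with n g Bp Bc \<longleftrightarrow>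
     regular_with {True} {True} (\<lambda>_::unit. n) (\<lambda>_. g) UNIV () Bp Bc"

definition classical_connective :: "nat \<Rightarrow> (bool list \<Rightarrow> bool) \<Rightarrow> bool" where
  "classical_connective n g \<longleftrightarrow> (\<exists>Bp Bc. classical_regular_with n g Bp Bc)"

end

theory Submission
  imports Defs
begin

text \<open>
  Say that a vector a of truth values refutes the sequent P \<turnstile> C over argument
  positions if its entries at P lie in D_p and its entries at C lie outside D_c. Unfolding
  the mixed consequence relation valuation by valuation shows that a connective with
  truth function f is regular with rule (B_p, B_c) as soon as f a \<in> D_p iff a refutes a
  member of B_p, and f a \<notin> D_c iff a refutes a member of B_c. Such an f exists unless
  some a demands a value in D_p - D_c, or in D_c - D_p, that is not there; the values 1
  and 0 serve the two other cases. If the rule is that of a classical connective g, an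
  unsatisfiable demand cannot occur: were D_p \<subseteq> D_c (resp. D_c \<subseteq> D_p), collapsing a to
  the booleans by membership in D_p (resp. D_c) would produce an argument vector at
  which g is both true and false (resp. neither), by the converse characterization of
  classical regularity. The G-conditional is the instance for classical implication.
\<close>

fun refutes :: "'v set \<Rightarrow> 'v set \<Rightarrow> 'v list \<Rightarrow> nat set \<times> nat set \<Rightarrow> bool" where
  "refutes Dp Dc a (P, C) \<longleftrightarrow> (\<forall>i\<in>P. a ! i \<in> Dp) \<and> (\<forall>i\<in>C. a ! i \<notin> Dc)"

lemma refutes_mono:
  "Dp \<subseteq> Dp' \<Longrightarrow> Dc' \<subseteq> Dc \<Longrightarrow> refutes Dp Dc a R \<Longrightarrow> refutes Dp' Dc' a R"
  by (cases R) auto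

lemma refutes_map:
  "fst R \<subseteq> {..<length a} \<Longrightarrow> snd R \<subseteq> {..<length a} \<Longrightarrow>
   refutes Dp Dc (map h a) R \<longleftrightarrow> refutes (h -` Dp) (h -` Dc) a R"
  by (cases R) (auto simp: subset_iff)

lemma mixed_models_insert_left:
  "mixed_models Dp Dc (insert x \<gamma>) \<delta> \<longleftrightarrow> (x \<in> Dp \<longrightarrow> mixed_models Dp Dc \<gamma> \<delta>)"
  by (auto simp: mixed_models_def)

lemma mixed_models_insert_right:
  "mixed_models Dp Dc \<gamma> (insert x \<delta>) \<longleftrightarrow> (x \<notin> Dc \<longrightarrow> mixed_models Dp Dc \<gamma> \<delta>)"
  by (auto simp: mixed_models_def)

lemma mixed_models_nth_sequent:
  "mixed_models Dp Dc (\<gamma> \<union> {a ! i |i. i \<in> P}) ({a ! i |i. i \<in> C} \<union> \<delta>)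
   \<longleftrightarrow> (refutes Dp Dc a (P, C) \<longrightarrow> mixed_models Dp Dc \<gamma> \<delta>)"
  by (auto simp: mixed_models_def)

lemma image_nth_set:
  "P \<subseteq> {..<length xs} \<Longrightarrow> f ` {xs ! i |i. i \<in> P} = {map f xs ! i |i. i \<in> P}"
  by force

lemma conseq_insert_left:
  "conseq Dp Dc I Vals (insert F \<Gamma>) \<Delta> \<longleftrightarrow>
   (\<forall>v\<in>Vals. eval I v F \<in> Dp \<longrightarrow> mixed_models Dp Dc (eval I v ` \<Gamma>) (eval I v ` \<Delta>))"
  by (simp add: conseq_def mixed_models_insert_left)

lemma conseq_insert_right:
  "conseq Dp Dc I Vals \<Gamma> (insert F \<Delta>) \<longleftrightarrow>
   (\<forall>v\<in>Vals. eval I v F \<notin> Dc \<longrightarrow> mixed_models Dp Dc (eval I v ` \<Gamma>) (eval I v ` \<Delta>))"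
  by (simp add: conseq_def mixed_models_insert_right)

lemma conseq_rule_premises_iff:
  assumes "\<forall>R\<in>B. fst R \<subseteq> {..<length Fs} \<and> snd R \<subseteq> {..<length Fs}"
  shows "(\<forall>(P, C)\<in>B. conseq Dp Dc I Vals (\<Gamma> \<union> {Fs ! i |i. i \<in> P}) ({Fs ! i |i. i \<in> C} \<union> \<Delta>))
    \<longleftrightarrow> (\<forall>v\<in>Vals. (\<exists>R\<in>B. refutes Dp Dc (map (eval I v) Fs) R) \<longrightarrow>
                     mixed_models Dp Dc (eval I v ` \<Gamma>) (eval I v ` \<Delta>))"
proof -
  have "conseq Dp Dc I Vals (\<Gamma> \<union> {Fs ! i |i. i \<in> P}) ({Fs ! i |i. i \<in> C} \<union> \<Delta>) \<longleftrightarrow>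
        (\<forall>v\<in>Vals. refutes Dp Dc (map (eval I v) Fs) (P, C) \<longrightarrow>
                  mixed_models Dp Dc (eval I v ` \<Gamma>) (eval I v ` \<Delta>))"
    if "(P, C) \<in> B" for P C
  proof -
    have "P \<subseteq> {..<length Fs}" "C \<subseteq> {..<length Fs}"
      using bspec[OF assms that] by simp_all
    then show ?thesis
      by (simp add: conseq_def image_Un image_nth_set mixed_models_nth_sequent)
  qed
  then show ?thesis by fast
qed

lemma regular_with_bounds:
  "regular_with Dp Dc ar I Vals c Bp Bc \<Longrightarrow> R \<in> Bp \<union> Bc \<Longrightarrow>
   fst R \<subseteq> {..<ar c} \<and> snd R \<subseteq> {..<ar c}"
  unfolding regular_with_def by blast

lemma regular_withD:
  assumes "regular_with Dp Dc ar I Vals c Bp Bc"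
    and "\<forall>F\<in>\<Gamma>. wf ar F" "\<forall>F\<in>\<Delta>. wf ar F" "length Fs = ar c" "list_all (wf ar) Fs"
  shows "conseq Dp Dc I Vals (insert (Op c Fs) \<Gamma>) \<Delta> \<longleftrightarrow>
      (\<forall>(P, C)\<in>Bp. conseq Dp Dc I Vals (\<Gamma> \<union> {Fs ! i |i. i \<in> P}) ({Fs ! i |i. i \<in> C} \<union> \<Delta>))"
    and "conseq Dp Dc I Vals \<Gamma> (insert (Op c Fs) \<Delta>) \<longleftrightarrow>
      (\<forall>(P, C)\<in>Bc. conseq Dp Dc I Vals (\<Gamma> \<union> {Fs ! i |i. i \<in> P}) ({Fs ! i |i. i \<in> C} \<union> \<Delta>))"
  using assms unfolding regular_with_def by blast+

lemma regular_with_if_truth_conditions: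
  assumes bounds: "\<forall>R\<in>Bp \<union> Bc. fst R \<subseteq> {..<ar c} \<and> snd R \<subseteq> {..<ar c}"
    and left: "\<And>a. length a = ar c \<Longrightarrow> I c a \<in> Dp \<longleftrightarrow> (\<exists>R\<in>Bp. refutes Dp Dc a R)"
    and right: "\<And>a. length a = ar c \<Longrightarrow> I c a \<notin> Dc \<longleftrightarrow> (\<exists>R\<in>Bc. refutes Dp Dc a R)"
  shows "regular_with Dp Dc ar I Vals c Bp Bc"
  unfolding regular_with_def
proof (intro conjI allI impI bounds)
  fix \<Gamma> \<Delta> and Fs :: "'a fm list"
  assume len: "length Fs = ar c"
  then have "\<forall>R\<in>Bp. fst R \<subseteq> {..<length Fs} \<and> snd R \<subseteq> {..<length Fs}"
    and "\<forall>R\<in>Bc. fst R \<subseteq> {..<length Fs} \<and> snd R \<subseteq> {..<length Fs}"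
    using bounds by auto
  with len show "conseq Dp Dc I Vals (insert (Op c Fs) \<Gamma>) \<Delta> \<longleftrightarrow>
      (\<forall>(P, C)\<in>Bp. conseq Dp Dc I Vals (\<Gamma> \<union> {Fs ! i |i. i \<in> P}) ({Fs ! i |i. i \<in> C} \<union> \<Delta>))"
    and "conseq Dp Dc I Vals \<Gamma> (insert (Op c Fs) \<Delta>) \<longleftrightarrow>
      (\<forall>(P, C)\<in>Bc. conseq Dp Dc I Vals (\<Gamma> \<union> {Fs ! i |i. i \<in> P}) ({Fs ! i |i. i \<in> C} \<union> \<Delta>))"
    by (simp_all add: conseq_insert_left conseq_insert_right conseq_rule_premises_iff left right)
qed

text \<open>
  The side formulas must single out the argument vector a. Classically the true and the
  false atoms do so; for general D_p, D_c such contexts need not exist, which is why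
  the converse is only available for classical connectives.
\<close>
lemma truth_conditions_if_regular_with:
  assumes reg: "regular_with Dp Dc ar I Vals c Bp Bc"
    and wf: "\<forall>F\<in>\<Gamma>. wf ar F" "\<forall>F\<in>\<Delta>. wf ar F" "list_all (wf ar) Fs"
    and len: "length Fs = ar c"
    and pinned: "\<And>v. v \<in> Vals \<Longrightarrow>
      mixed_models Dp Dc (eval I v ` \<Gamma>) (eval I v ` \<Delta>) \<longleftrightarrow> map (eval I v) Fs \<noteq> a"
    and realized: "\<exists>v\<in>Vals. map (eval I v) Fs = a"
  shows "I c a \<in> Dp \<longleftrightarrow> (\<exists>R\<in>Bp. refutes Dp Dc a R)"
    and "I c a \<notin> Dc \<longleftrightarrow> (\<exists>R\<in>Bc. refutes Dp Dc a R)"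
proof -
  have only_a: "(\<forall>v\<in>Vals. Q (map (eval I v) Fs) \<longrightarrow> map (eval I v) Fs \<noteq> a) \<longleftrightarrow> \<not> Q a"
    for Q using realized by auto
  have bp: "\<forall>R\<in>Bp. fst R \<subseteq> {..<length Fs} \<and> snd R \<subseteq> {..<length Fs}"
    and bc: "\<forall>R\<in>Bc. fst R \<subseteq> {..<length Fs} \<and> snd R \<subseteq> {..<length Fs}"
    using regular_with_bounds[OF reg] len by auto
  have "(\<forall>(P, C)\<in>Bp. conseq Dp Dc I Vals (\<Gamma> \<union> {Fs ! i |i. i \<in> P}) ({Fs ! i |i. i \<in> C} \<union> \<Delta>))
      \<longleftrightarrow> \<not> (\<exists>R\<in>Bp. refutes Dp Dc a R)"
    unfolding conseq_rule_premises_iff[OF bp]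
    by (simp only: pinned only_a[of "\<lambda>x. \<exists>R\<in>Bp. refutes Dp Dc x R"] cong: ball_cong)
  moreover have "(\<forall>(P, C)\<in>Bc. conseq Dp Dc I Vals (\<Gamma> \<union> {Fs ! i |i. i \<in> P}) ({Fs ! i |i. i \<in> C} \<union> \<Delta>))
      \<longleftrightarrow> \<not> (\<exists>R\<in>Bc. refutes Dp Dc a R)"
    unfolding conseq_rule_premises_iff[OF bc]
    by (simp only: pinned only_a[of "\<lambda>x. \<exists>R\<in>Bc. refutes Dp Dc x R"] cong: ball_cong)
  moreover have "conseq Dp Dc I Vals (insert (Op c Fs) \<Gamma>) \<Delta> \<longleftrightarrow> I c a \<notin> Dp"
    and "conseq Dp Dc I Vals \<Gamma> (insert (Op c Fs) \<Delta>) \<longleftrightarrow> I c a \<in> Dc"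
    by (simp_all only: conseq_insert_left conseq_insert_right eval.simps pinned
        only_a[of "\<lambda>x. I c x \<in> Dp"] only_a[of "\<lambda>x. I c x \<notin> Dc"] not_not cong: ball_cong)
  moreover have "conseq Dp Dc I Vals (insert (Op c Fs) \<Gamma>) \<Delta> \<longleftrightarrow>
      (\<forall>(P, C)\<in>Bp. conseq Dp Dc I Vals (\<Gamma> \<union> {Fs ! i |i. i \<in> P}) ({Fs ! i |i. i \<in> C} \<union> \<Delta>))"
    and "conseq Dp Dc I Vals \<Gamma> (insert (Op c Fs) \<Delta>) \<longleftrightarrow>
      (\<forall>(P, C)\<in>Bc. conseq Dp Dc I Vals (\<Gamma> \<union> {Fs ! i |i. i \<in> P}) ({Fs ! i |i. i \<in> C} \<union> \<Delta>))"
    using regular_withD[OF reg wf(1,2) len wf(3)] by simp_all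
  ultimately show "I c a \<in> Dp \<longleftrightarrow> (\<exists>R\<in>Bp. refutes Dp Dc a R)"
    and "I c a \<notin> Dc \<longleftrightarrow> (\<exists>R\<in>Bc. refutes Dp Dc a R)"
    by blast+
qed

lemma classical_truth_conditions:
  assumes reg: "classical_regular_with n g Bp Bc" and len: "length b = n"
  shows "g b \<longleftrightarrow> (\<exists>R\<in>Bp. refutes {True} {True} b R)"
    and "\<not> g b \<longleftrightarrow> (\<exists>R\<in>Bc. refutes {True} {True} b R)"
proof -
  let ?\<Gamma> = "Atom ` {i. i < n \<and> b ! i}" and ?\<Delta> = "Atom ` {i. i < n \<and> \<not> b ! i}"
    and ?Fs = "map Atom [0..<n] :: unit fm list"
  have "mixed_models {True} {True} (eval (\<lambda>_. g) v ` ?\<Gamma>) (eval (\<lambda>_. g) v ` ?\<Delta>)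
      \<longleftrightarrow> map (eval (\<lambda>_. g) v) ?Fs \<noteq> b" for v
    using len by (auto simp: mixed_models_def list_eq_iff_nth_eq image_subset_iff)
  moreover have "map (eval (\<lambda>_. g) (\<lambda>i. i < n \<and> b ! i)) ?Fs = b"
    using len by (simp add: list_eq_iff_nth_eq)
  ultimately show "g b \<longleftrightarrow> (\<exists>R\<in>Bp. refutes {True} {True} b R)"
    and "\<not> g b \<longleftrightarrow> (\<exists>R\<in>Bc. refutes {True} {True} b R)"
    using truth_conditions_if_regular_with[OF reg[unfolded classical_regular_with_def],
        of ?\<Gamma> ?\<Delta> ?Fs b]
    by (auto simp: list_all_iff)
qed

lemma classical_rule_conflicts:
  assumes reg: "classical_regular_with n g Bp Bc" and len: "length a = n"
  shows "(\<exists>R\<in>Bp. refutes Dp Dc a R) \<Longrightarrow> (\<exists>R\<in>Bc. refutes Dp Dc a R) \<Longrightarrow> \<exists>x\<in>Dp. x \<notin> Dc"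
    and "\<not> (\<exists>R\<in>Bp. refutes Dp Dc a R) \<Longrightarrow> \<not> (\<exists>R\<in>Bc. refutes Dp Dc a R) \<Longrightarrow> \<exists>x\<in>Dc. x \<notin> Dp"
proof -
  have as_classical: "refutes {True} {True} (map (\<lambda>x. x \<in> D) a) R \<longleftrightarrow> refutes D D a R"
    if "R \<in> Bp \<union> Bc" for D R
  proof -
    have "fst R \<subseteq> {..<length a}" "snd R \<subseteq> {..<length a}"
      using regular_with_bounds[OF reg[unfolded classical_regular_with_def] that] len by simp_all
    moreover have "(\<lambda>x. x \<in> D) -` {True} = D"
      by auto
    ultimately show ?thesis
      by (simp only: refutes_map)
  qed
  show "\<exists>x\<in>Dp. x \<notin> Dc"
    if "\<exists>R\<in>Bp. refutes Dp Dc a R" and "\<exists>R\<in>Bc. refutes Dp Dc a R"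
  proof (rule ccontr)
    assume "\<not> (\<exists>x\<in>Dp. x \<notin> Dc)"
    then have "Dp \<subseteq> Dc"
      by blast
    then have "refutes Dp Dc a R \<Longrightarrow> refutes Dp Dp a R" for R
      by (rule refutes_mono[OF order_refl])
    then have "\<exists>R\<in>Bp. refutes {True} {True} (map (\<lambda>x. x \<in> Dp) a) R"
      and "\<exists>R\<in>Bc. refutes {True} {True} (map (\<lambda>x. x \<in> Dp) a) R"
      using that as_classical by blast+
    then show False
      using classical_truth_conditions[OF reg, of "map (\<lambda>x. x \<in> Dp) a"] len by simp
  qed
  show "\<exists>x\<in>Dc. x \<notin> Dp"
    if "\<not> (\<exists>R\<in>Bp. refutes Dp Dc a R)" and "\<not> (\<exists>R\<in>Bc. refutes Dp Dc a R)"
  proof (rule ccontr)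
    assume "\<not> (\<exists>x\<in>Dc. x \<notin> Dp)"
    then have "Dc \<subseteq> Dp"
      by blast
    then have "refutes Dc Dc a R \<Longrightarrow> refutes Dp Dc a R" for R
      by (rule refutes_mono[OF _ order_refl])
    then have "\<not> (\<exists>R\<in>Bp. refutes {True} {True} (map (\<lambda>x. x \<in> Dc) a) R)"
      and "\<not> (\<exists>R\<in>Bc. refutes {True} {True} (map (\<lambda>x. x \<in> Dc) a) R)"
      using that as_classical by blast+
    then show False
      using classical_truth_conditions[OF reg, of "map (\<lambda>x. x \<in> Dc) a"] len by simp
  qed
qed

lemma ex_value_with_designation:
  assumes "one \<in> Dp" "one \<in> Dc" "zero \<notin> Dp" "zero \<notin> Dc"
    and "p \<Longrightarrow> q \<Longrightarrow> \<exists>x\<in>Dp. x \<notin> Dc"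
    and "\<not> p \<Longrightarrow> \<not> q \<Longrightarrow> \<exists>x\<in>Dc. x \<notin> Dp"
  shows "\<exists>x. (x \<in> Dp \<longleftrightarrow> p) \<and> (x \<notin> Dc \<longleftrightarrow> q)"
proof -
  consider "p" "q" | "p" "\<not> q" | "\<not> p" "q" | "\<not> p" "\<not> q"
    by blast
  then show ?thesis
  proof cases
    case 1
    then obtain x where "x \<in> Dp" "x \<notin> Dc"
      using assms(5) by blast
    with 1 show ?thesis by blast
  next
    case 2
    with assms(1,2) show ?thesis by blast
  next
    case 3
    with assms(3,4) show ?thesis by blast
  next
    case 4
    then obtain x where "x \<in> Dc" "x \<notin> Dp"
      using assms(6) by blast
    with 4 show ?thesis by blast
  qed
qed

lemma ex_regular_sharing_classical_rule:
  assumes reg: "classical_regular_with n g Bp Bc"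
    and "one \<in> Dp" "one \<in> Dc" "zero \<notin> Dp" "zero \<notin> Dc"
  shows "\<exists>f. regular_with Dp Dc (ext_ar ar n) (ext_I I f) Vals None Bp Bc"
proof -
  let ?truth_conditions = "\<lambda>a x. (x \<in> Dp \<longleftrightarrow> (\<exists>R\<in>Bp. refutes Dp Dc a R))
                                 \<and> (x \<notin> Dc \<longleftrightarrow> (\<exists>R\<in>Bc. refutes Dp Dc a R))"
  define f where "f a = (SOME x. ?truth_conditions a x)" for a
  have f: "?truth_conditions a (f a)" if "length a = n" for a
    unfolding f_def
    by (rule someI_ex, rule ex_value_with_designation[OF assms(2-5)])
      (fact classical_rule_conflicts[OF reg that])+
  have "\<forall>R\<in>Bp \<union> Bc. fst R \<subseteq> {..<n} \<and> snd R \<subseteq> {..<n}"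
    using regular_with_bounds[OF reg[unfolded classical_regular_with_def]] by simp
  with f have "regular_with Dp Dc (ext_ar ar n) (ext_I I f) Vals None Bp Bc"
    by (intro regular_with_if_truth_conditions) (simp_all add: ext_ar_def ext_I_def)
  then show ?thesis by blast
qed

definition conditional_left_rule :: "(nat set \<times> nat set) set" where
  "conditional_left_rule = {({}, {0}), ({1}, {})}"

definition conditional_right_rule :: "(nat set \<times> nat set) set" where
  "conditional_right_rule = {({0}, {1})}"

lemma classical_regular_implication:
  "classical_regular_with 2 (\<lambda>b. b ! 0 \<longrightarrow> b ! 1) conditional_left_rule conditional_right_rule"
  unfolding classical_regular_with_def
  by (rule regular_with_if_truth_conditions)
    (auto simp: conditional_left_rule_def conditional_right_rule_def)

lemma G_conditional_if_regular_with:
  assumes ar: "ar c = 2"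
    and reg: "regular_with Dp Dc ar I Vals c conditional_left_rule conditional_right_rule"
  shows "G_conditional Dp Dc ar I Vals c"
  unfolding G_conditional_def
proof (intro conjI allI impI ar)
  fix \<Gamma> \<Delta> A B
  assume wf: "\<forall>F\<in>\<Gamma>. wf ar F" "\<forall>F\<in>\<Delta>. wf ar F" "wf ar A" "wf ar B"
  then have "length [A, B] = ar c" "list_all (wf ar) [A, B]"
    using ar by simp_all
  note rule_instances = regular_withD[OF reg wf(1,2) this]
  have nth_sets: "{[A, B] ! i |i. i \<in> {0}} = {A}" "{[A, B] ! i |i. i \<in> {1}} = {B}"
    "{[A, B] ! i |i. i \<in> {}} = {}"
    by auto
  show "conseq Dp Dc I Vals \<Gamma> (insert (Op c [A, B]) \<Delta>)
      \<longleftrightarrow> conseq Dp Dc I Vals (insert A \<Gamma>) (insert B \<Delta>)"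
    using rule_instances(2) by (simp add: conditional_right_rule_def nth_sets)
  show "conseq Dp Dc I Vals (insert (Op c [A, B]) \<Gamma>) \<Delta>
      \<longleftrightarrow> conseq Dp Dc I Vals \<Gamma> (insert A \<Delta>) \<and> conseq Dp Dc I Vals (insert B \<Gamma>) \<Delta>"
    using rule_instances(1) by (simp add: conditional_left_rule_def nth_sets)
qed

theorem theorem6p1:
  fixes one zero :: "'v::finite"
    and Dp Dc :: "'v set"
    and ar :: "'c \<Rightarrow> nat"
    and I :: "'c \<Rightarrow> 'v list \<Rightarrow> 'v"
    and Vals :: "(nat \<Rightarrow> 'v) set"
  assumes "one \<noteq> zero"
    and "one \<in> Dp" and "zero \<notin> Dp"
    and "one \<in> Dc" and "zero \<notin> Dc"
    and "realizes_finite Vals"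
    and "constant_expressive ar I Vals"
  shows "(\<exists>f. G_conditional Dp Dc (ext_ar ar 2) (ext_I I f) Vals None)
       \<and> (\<forall>n g. classical_connective n g \<longrightarrow>
            (\<exists>f Bp Bc. classical_regular_with n g Bp Bc \<and>
                regular_with Dp Dc (ext_ar ar n) (ext_I I f) Vals None Bp Bc))"
proof
  obtain f where "regular_with Dp Dc (ext_ar ar 2) (ext_I I f) Vals None
      conditional_left_rule conditional_right_rule"
    using ex_regular_sharing_classical_rule[OF classical_regular_implication assms(2,4,3,5)] by blast
  then have "G_conditional Dp Dc (ext_ar ar 2) (ext_I I f) Vals None"
    by (rule G_conditional_if_regular_with[rotated]) (simp add: ext_ar_def)
  then show "\<exists>f. G_conditional Dp Dc (ext_ar ar 2) (ext_I I f) Vals None" by blast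
next
  show "\<forall>n g. classical_connective n g \<longrightarrow>
      (\<exists>f Bp Bc. classical_regular_with n g Bp Bc \<and>
          regular_with Dp Dc (ext_ar ar n) (ext_I I f) Vals None Bp Bc)"
  proof (intro allI impI)
    fix n g
    assume "classical_connective n g"
    then obtain Bp Bc where classical: "classical_regular_with n g Bp Bc"
      unfolding classical_connective_def by blast
    moreover obtain f where "regular_with Dp Dc (ext_ar ar n) (ext_I I f) Vals None Bp Bc"
      using ex_regular_sharing_classical_rule[OF classical assms(2,4,3,5)] by blast
    ultimately show "\<exists>f Bp Bc. classical_regular_with n g Bp Bc \<and>
        regular_with Dp Dc (ext_ar ar n) (ext_I I f) Vals None Bp Bc"
      by blast
  qed
qed

end
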